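(* Every EPS-graph is $1$-critical, but not $0$-critical.
   Context: All graphs are finite and simple; $\mathrm{Forb}(H)$ is the family of graphs with no induced subgraph isomorphic to $H$. $\mathcal{C}$ is the family of complete graphs; $\iota(J)$ is the family of graphs isomorphic to induced subgraphs of $J$; $\mathcal{F}_1\vee\mathcal{F}_2$ (resp. $\mathcal{F}_1\wedge\mathcal{F}_2$) is the family of disjoint unions (resp. joins) of a graph in $\mathcal{F}_1$ and a graph in $\mathcal{F}_2$; $S_2$ is the edgeless graph on $2$ vertices, $K_2$ an edge. $\mathcal{C}^+$ is the family of graphs $G$ that are complete or such that $G\setminus v$ is complete for some $v\in V(G)$ with $\deg(v)\le1$. The complement of a star $K_{1,m}$ is called the complement of a star. For a positive integer $l$, a graph $H$ is an $l$-EPS-graph if: (EPS1) for every $1\le s\le l$, $V(H)$ can be partitioned into $s$ stable sets and $l-s$ cliques; (EPS2) for each $\mathcal{G}\in\{\iota(S_2)\vee\mathcal{C},\iota(K_2)\vee\mathcal{C},\iota(S_2)\wedge\mathcal{C},\mathcal{C}^+\}$, $V(H)$ can be partitioned into $l-1$ cliques and a set inducing a graph in $\mathcal{G}$; (EPS3) there is no partition $(X_1,\dots,X_l)$ of $V(H)$ such that $H[X_1]$ is a clique or a complement of a star and $X_i$ is a clique for $2\le i\le l$. An EPS-graph is an $l$-EPS-graph for some $l$. $\mathcal{H}(s,t)$ is the family of graphs whose vertex set partitions into $s$ stable sets and $t$ cliques. For hereditary $\mathcal{F}$, $\chi_c(\mathcal{F})$ is the maximum $l$ with $\mathcal{H}(s,l-s)\subseteq\mathcal{F}$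 for some $0\le s\le l$. With $l=\chi_c(\mathcal{F})$, $J$ is $\mathcal{F}$-reduced if there is $0\le s\le l-1$ such that $\mathcal{F}$ contains every graph whose vertex set partitions into $l$ parts, one inducing a graph isomorphic to an induced subgraph of $J$, $s$ stable sets and $l-1-s$ cliques; $\mathrm{red}(\mathcal{F})$ is the family of $\mathcal{F}$-reduced graphs. A graph $G$ is an $s$-star if there is $S\subseteq V(G)$, $|S|\le s$, with $G-S$ complete or edgeless and every vertex of $S$ adjacent to all or none of $V(G)\setminus S$. A graph $H$ is $s$-critical if there is $n_0$ such that every $K\in\mathrm{red}(\mathrm{Forb}(H))$ with $|V(K)|\ge n_0$ is an $s$-star. *)

theory Defs
  imports Main
begin

text \<open>Finite simple graphs: a vertex set and a set of edges, each edge a 2-element set.\<close>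
type_synonym 'a graph = "'a set \<times> 'a set set"

definition verts :: "'a graph \<Rightarrow> 'a set" where "verts G = fst G"
definition edges :: "'a graph \<Rightarrow> 'a set set" where "edges G = snd G"

definition wf_graph :: "'a graph \<Rightarrow> bool" where
  "wf_graph G \<longleftrightarrow> finite (verts G) \<and>
     (\<forall>e\<in>edges G. \<exists>u v. u \<in> verts G \<and> v \<in> verts G \<and> u \<noteq> v \<and> e = {u, v})"

definition adj :: "'a graph \<Rightarrow> 'a \<Rightarrow> 'a \<Rightarrow> bool" where
  "adj G u v \<longleftrightarrow> u \<noteq> v \<and> {u, v} \<in> edges G"

definition clique :: "'a graph \<Rightarrow> 'a set \<Rightarrow> bool" where
  "clique G X \<longleftrightarrow> X \<subseteq> verts G \<and> (\<forall>u\<in>X. \<forall>v\<in>X. u \<noteq> v \<longrightarrow> adj G u v)"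

definition stable :: "'a graph \<Rightarrow> 'a set \<Rightarrow> bool" where
  "stable G X \<longleftrightarrow> X \<subseteq> verts G \<and> (\<forall>u\<in>X. \<forall>v\<in>X. \<not> adj G u v)"

definition induced :: "'a graph \<Rightarrow> 'a set \<Rightarrow> 'a graph" where
  "induced G X = (X, {e \<in> edges G. e \<subseteq> X})"

definition graph_iso :: "'a graph \<Rightarrow> 'b graph \<Rightarrow> bool" where
  "graph_iso G H \<longleftrightarrow> (\<exists>f. bij_betw f (verts G) (verts H) \<and>
      (\<forall>u\<in>verts G. \<forall>v\<in>verts G. adj G u v \<longleftrightarrow> adj H (f u) (f v)))"

text \<open>J contains an induced subgraph isomorphic to G (i.e. G is in iota(J)).\<close>
definition contains_induced :: "'a graph \<Rightarrow> 'b graph \<Rightarrow> bool" where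
  "contains_induced J G \<longleftrightarrow> (\<exists>Y \<subseteq> verts J. graph_iso (induced J Y) G)"

text \<open>The vertex subset W partitions into s stable sets and t cliques (empty parts allowed).\<close>
definition part_st :: "'a graph \<Rightarrow> 'a set \<Rightarrow> nat \<Rightarrow> nat \<Rightarrow> bool" where
  "part_st G W s t \<longleftrightarrow> (\<exists>f :: 'a \<Rightarrow> nat. (\<forall>v\<in>W. f v < s + t) \<and>
      (\<forall>i<s. stable G {v\<in>W. f v = i}) \<and>
      (\<forall>i. s \<le> i \<and> i < s + t \<longrightarrow> clique G {v\<in>W. f v = i}))"

text \<open>The four families of EPS2 (disjoint union / join expressed via vertex partitions).\<close>
definition fam_S2_or_C :: "'a graph \<Rightarrow> bool" where
  "fam_S2_or_C G \<longleftrightarrow> (\<exists>A B. A \<inter> B = {} \<and> A \<union> B = verts G \<and> stable G A \<and> card A \<le> 2 \<and>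
      clique G B \<and> (\<forall>a\<in>A. \<forall>b\<in>B. \<not> adj G a b))"

definition fam_K2_or_C :: "'a graph \<Rightarrow> bool" where
  "fam_K2_or_C G \<longleftrightarrow> (\<exists>A B. A \<inter> B = {} \<and> A \<union> B = verts G \<and> clique G A \<and> card A \<le> 2 \<and>
      clique G B \<and> (\<forall>a\<in>A. \<forall>b\<in>B. \<not> adj G a b))"

definition fam_S2_join_C :: "'a graph \<Rightarrow> bool" where
  "fam_S2_join_C G \<longleftrightarrow> (\<exists>A B. A \<inter> B = {} \<and> A \<union> B = verts G \<and> stable G A \<and> card A \<le> 2 \<and>
      clique G B \<and> (\<forall>a\<in>A. \<forall>b\<in>B. adj G a b))"

definition fam_Cplus :: "'a graph \<Rightarrow> bool" where
  "fam_Cplus G \<longleftrightarrow> clique G (verts G) \<or>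
     (\<exists>v\<in>verts G. clique G (verts G - {v}) \<and> card {u\<in>verts G. adj G v u} \<le> 1)"

definition co_star :: "'a graph \<Rightarrow> bool" where
  "co_star G \<longleftrightarrow> (\<exists>v\<in>verts G. clique G (verts G - {v}) \<and> (\<forall>u\<in>verts G. \<not> adj G v u))"

definition EPS2_part :: "('a graph \<Rightarrow> bool) \<Rightarrow> nat \<Rightarrow> 'a graph \<Rightarrow> bool" where
  "EPS2_part P l H \<longleftrightarrow> (\<exists>X \<subseteq> verts H. P (induced H X) \<and> part_st H (verts H - X) 0 (l - 1))"

definition l_EPS :: "nat \<Rightarrow> 'a graph \<Rightarrow> bool" where
  "l_EPS l H \<longleftrightarrow> l \<ge> 1 \<and>
     (\<forall>s. 1 \<le> s \<and> s \<le> l \<longrightarrow> part_st H (verts H) s (l - s)) \<and>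
     EPS2_part fam_S2_or_C l H \<and> EPS2_part fam_K2_or_C l H \<and>
     EPS2_part fam_S2_join_C l H \<and> EPS2_part fam_Cplus l H \<and>
     \<not> (\<exists>f :: 'a \<Rightarrow> nat. (\<forall>v\<in>verts H. f v < l) \<and>
          (clique H {v\<in>verts H. f v = 0} \<or> co_star (induced H {v\<in>verts H. f v = 0})) \<and>
          (\<forall>i. 1 \<le> i \<and> i < l \<longrightarrow> clique H {v\<in>verts H. f v = i}))"

definition EPS_graph :: "'a graph \<Rightarrow> bool" where
  "EPS_graph H \<longleftrightarrow> (\<exists>l. l_EPS l H)"

text \<open>Families of graphs are sets of graphs on vertex type nat (every finite graph has such a copy).\<close>
definition Forb :: "'a graph \<Rightarrow> nat graph set" where
  "Forb H = {G. wf_graph G \<and> \<not> contains_induced G H}"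

definition H_st :: "nat \<Rightarrow> nat \<Rightarrow> nat graph set" where
  "H_st s t = {G. wf_graph G \<and> part_st G (verts G) s t}"

definition chi_c :: "nat graph set \<Rightarrow> nat" where
  "chi_c F = (GREATEST l. \<exists>s\<le>l. H_st s (l - s) \<subseteq> F)"

definition reduced :: "nat graph set \<Rightarrow> nat graph \<Rightarrow> bool" where
  "reduced F J \<longleftrightarrow> (let l = chi_c F in \<exists>s. s + 1 \<le> l \<and>
     (\<forall>G. wf_graph G \<and> (\<exists>X \<subseteq> verts G. contains_induced J (induced G X) \<and>
            part_st G (verts G - X) s (l - 1 - s)) \<longrightarrow> G \<in> F))"

definition red :: "nat graph set \<Rightarrow> nat graph set" where
  "red F = {J. wf_graph J \<and> reduced F J}"

definition s_star :: "nat \<Rightarrow> 'a graph \<Rightarrow> bool" where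
  "s_star s G \<longleftrightarrow> (\<exists>S \<subseteq> verts G. card S \<le> s \<and>
     (clique G (verts G - S) \<or> stable G (verts G - S)) \<and>
     (\<forall>x\<in>S. (\<forall>y\<in>verts G - S. adj G x y) \<or> (\<forall>y\<in>verts G - S. \<not> adj G x y)))"

definition critical :: "nat \<Rightarrow> 'a graph \<Rightarrow> bool" where
  "critical s H \<longleftrightarrow> (\<exists>n0. \<forall>K\<in>red (Forb H). card (verts K) \<ge> n0 \<longrightarrow> s_star s K)"

end

theory Submission
  imports "HOL-Library.Ramsey" Defs
begin

text \<open>Let H be an l-EPS-graph. By EPS3, H is not the union of l cliques, while EPS1 and the C+
  piece of EPS2 split it into s stable sets and l' - s cliques for every l' > l and s \<le> l'. Hence
  chi_c(Forb H) = l, and J is Forb(H)-reduced iff for some s < l no induced subgraph H[X] with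
  H - X splitting into s stable sets and l - 1 - s cliques lies in iota(J).

  By EPS3 every complement of a star is then reduced, and these are not 0-stars.

  Let K be a large reduced graph. By Ramsey's theorem K has a stable set or a clique of size at
  least 2|V(H)|; EPS1 with s + 1 stable sets excludes the stable set, and EPS1 with s stable sets
  forces s = 0. For a large clique C of K the four EPS2 pieces of H exclude two vertices
  anticomplete to C, two non-adjacent vertices complete to C, and an edge wq with w anticomplete
  and q complete to C (by EPS3 the C+ piece is a clique plus a vertex of degree exactly one).
  Applied to a maximum clique Q, the last two configurations make every vertex outside Q
  anticomplete to Q, and the first leaves at most one such vertex, so K is a 1-star.\<close>

lemma verts_induced [simp]: "verts (induced G X) = X"
  by (simp add: verts_def induced_def)

lemma adj_induced: "u \<in> X \<Longrightarrow> v \<in> X \<Longrightarrow> adj (induced G X) u v \<longleftrightarrow> adj G u v"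
  by (auto simp: adj_def induced_def edges_def)

lemma adj_commute: "adj G u v \<longleftrightarrow> adj G v u"
  by (auto simp: adj_def insert_commute)

lemma adj_irrefl [simp]: "\<not> adj G u u"
  by (simp add: adj_def)

lemma clique_subset: "clique G X \<Longrightarrow> Y \<subseteq> X \<Longrightarrow> clique G Y"
  unfolding clique_def by auto

lemma clique_empty [simp]: "clique G {}" and stable_empty [simp]: "stable G {}"
  by (simp_all add: clique_def stable_def)

lemma clique_insert:
  "clique G (insert w Q) \<longleftrightarrow> clique G Q \<and> w \<in> verts G \<and> (\<forall>q\<in>Q. q \<noteq> w \<longrightarrow> adj G w q)"
  unfolding clique_def by (auto simp: adj_commute)

lemma clique_pair: "a \<in> verts G \<Longrightarrow> b \<in> verts G \<Longrightarrow> adj G a b \<Longrightarrow> clique G {a, b}"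
  unfolding clique_def by (auto simp: adj_commute)

lemma stable_pair: "a \<in> verts G \<Longrightarrow> b \<in> verts G \<Longrightarrow> \<not> adj G a b \<Longrightarrow> stable G {a, b}"
  unfolding stable_def by (auto simp: adj_commute)

lemma clique_induced_iff: "X \<subseteq> verts G \<Longrightarrow> clique (induced G X) Y \<longleftrightarrow> Y \<subseteq> X \<and> clique G Y"
  unfolding clique_def by (auto simp: adj_induced subset_iff)

section \<open>Induced embeddings\<close>

definition induced_emb :: "'a graph \<Rightarrow> 'b graph \<Rightarrow> ('a \<Rightarrow> 'b) \<Rightarrow> bool" where
  "induced_emb G J g \<longleftrightarrow> inj_on g (verts G) \<and> g ` verts G \<subseteq> verts J \<and>
     (\<forall>u\<in>verts G. \<forall>v\<in>verts G. adj G u v \<longleftrightarrow> adj J (g u) (g v))"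

lemma induced_emb_induced:
  "induced_emb (induced G A) J g \<longleftrightarrow>
     inj_on g A \<and> g ` A \<subseteq> verts J \<and> (\<forall>u\<in>A. \<forall>v\<in>A. adj G u v \<longleftrightarrow> adj J (g u) (g v))"
  by (auto simp: induced_emb_def adj_induced)

lemma contains_induced_iff_emb: "contains_induced J G \<longleftrightarrow> (\<exists>g. induced_emb G J g)"
proof
  assume "contains_induced J G"
  then obtain Y f where Y: "Y \<subseteq> verts J" and f: "bij_betw f Y (verts G)"
    and adj_f: "\<forall>u\<in>Y. \<forall>v\<in>Y. adj (induced J Y) u v \<longleftrightarrow> adj G (f u) (f v)"
    unfolding contains_induced_def graph_iso_def by auto
  have g: "bij_betw (inv_into Y f) (verts G) Y"
    using f by (rule bij_betw_inv_into)
  have "induced_emb G J (inv_into Y f)"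
    unfolding induced_emb_def
  proof (intro conjI ballI)
    show "inj_on (inv_into Y f) (verts G)" "inv_into Y f ` verts G \<subseteq> verts J"
      using g Y by (auto simp: bij_betw_def)
  next
    fix u v assume "u \<in> verts G" "v \<in> verts G"
    moreover from this have "inv_into Y f u \<in> Y" "inv_into Y f v \<in> Y"
      using g by (auto dest: bij_betwE)
    ultimately show "adj G u v \<longleftrightarrow> adj J (inv_into Y f u) (inv_into Y f v)"
      using adj_f f by (simp add: adj_induced bij_betw_inv_into_right)
  qed
  then show "\<exists>g. induced_emb G J g" by blast
next
  assume "\<exists>g. induced_emb G J g"
  then obtain g where g: "induced_emb G J g" ..
  then have inj: "inj_on g (verts G)" by (simp add: induced_emb_def)
  have "graph_iso (induced J (g ` verts G)) G"
    unfolding graph_iso_def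
  proof (intro exI conjI ballI)
    show "bij_betw (inv_into (verts G) g) (verts (induced J (g ` verts G))) (verts G)"
      using inj by (simp add: bij_betw_inv_into inj_on_imp_bij_betw)
  next
    fix u v assume "u \<in> verts (induced J (g ` verts G))" "v \<in> verts (induced J (g ` verts G))"
    then show "adj (induced J (g ` verts G)) u v \<longleftrightarrow>
        adj G (inv_into (verts G) g u) (inv_into (verts G) g v)"
      using g inj by (auto simp: adj_induced induced_emb_def)
  qed
  moreover have "g ` verts G \<subseteq> verts J" using g by (simp add: induced_emb_def)
  ultimately show "contains_induced J G" unfolding contains_induced_def by blast
qed

lemma induced_emb_comp: "induced_emb G J g \<Longrightarrow> induced_emb J K k \<Longrightarrow> induced_emb G K (k \<circ> g)"
  unfolding induced_emb_def image_subset_iff by (auto intro: comp_inj_on inj_on_subset)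

lemma induced_emb_restrict:
  "induced_emb G J g \<Longrightarrow> W \<subseteq> verts G \<Longrightarrow> g ` W \<subseteq> Z \<Longrightarrow> induced_emb (induced G W) (induced J Z) g"
  unfolding induced_emb_def image_subset_iff by (auto simp: adj_induced subset_iff intro: inj_on_subset)

lemma induced_emb_inv:
  "induced_emb G J g \<Longrightarrow> g ` verts G = verts J \<Longrightarrow> induced_emb J G (inv_into (verts G) g)"
  unfolding induced_emb_def by (auto simp: inj_on_inv_into inv_into_into f_inv_into_f)

text \<open>Families of graphs live on vertex type nat, so H enters them through a copy on nat.\<close>
lemma ex_nat_copy:
  assumes "finite (verts H)"
  obtains H' :: "nat graph" and \<psi> where "wf_graph H'" "induced_emb H' H \<psi>" "contains_induced H' H"
proof -
  define n where "n = card (verts H)"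
  obtain \<psi> where \<psi>: "bij_betw \<psi> {0..<n} (verts H)"
    using ex_bij_betw_nat_finite[OF assms] by (auto simp: n_def)
  define H' :: "nat graph" where
    "H' = ({0..<n}, {{i, j} | i j. i < n \<and> j < n \<and> adj H (\<psi> i) (\<psi> j)})"
  have adj_H': "adj H' i j \<longleftrightarrow> adj H (\<psi> i) (\<psi> j)" if "i < n" "j < n" for i j
    using that by (auto simp: H'_def adj_def edges_def doubleton_eq_iff insert_commute)
  have "wf_graph H'"
    by (auto simp: wf_graph_def H'_def verts_def edges_def adj_def)
  moreover have emb: "induced_emb H' H \<psi>"
    using \<psi> adj_H' by (auto simp: induced_emb_def H'_def verts_def bij_betw_def)
  moreover have "\<psi> ` verts H' = verts H"
    using \<psi> by (simp add: H'_def verts_def bij_betw_def)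
  then have "contains_induced H' H"
    unfolding contains_induced_iff_emb using induced_emb_inv[OF emb] by blast
  ultimately show thesis by (rule that)
qed

lemma induced_emb_homogeneous:
  assumes "A \<subseteq> verts G" "finite A" "finite T" "card A \<le> card T"
    and "clique G A \<and> clique J T \<or> stable G A \<and> stable J T"
  obtains g where "induced_emb (induced G A) J g" "g ` A \<subseteq> T"
proof -
  obtain g where g: "g ` A \<subseteq> T" "inj_on g A"
    using card_le_inj[OF assms(2-4)] by blast
  have "adj G u v \<longleftrightarrow> adj J (g u) (g v)" if "u \<in> A" "v \<in> A" for u v
  proof (cases "u = v")
    case False
    then have "g u \<noteq> g v" using inj_onD[OF g(2)] that by blast
    then show ?thesis using assms(5) g(1) that False unfolding clique_def stable_def by blast
  qed simp
  moreover have "T \<subseteq> verts J" using assms(5) by (auto simp: clique_def stable_def)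
  ultimately have "induced_emb (induced G A) J g"
    using g by (auto simp: induced_emb_induced)
  with g show thesis by (intro that)
qed

lemma induced_emb_Un:
  assumes V: "verts G = A \<union> B" "A \<inter> B = {}"
    and gA: "induced_emb (induced G A) J gA" and gB: "induced_emb (induced G B) J gB"
    and disj: "gA ` A \<inter> gB ` B = {}"
    and cross: "\<forall>a\<in>A. \<forall>b\<in>B. adj G a b \<longleftrightarrow> adj J (gA a) (gB b)"
  shows "induced_emb G J (\<lambda>x. if x \<in> A then gA x else gB x)"
proof -
  have "inj_on (\<lambda>x. if x \<in> A then gA x else gB x) (A \<union> B)"
    using gA gB disj V(2) by (auto simp: induced_emb_induced inj_on_def)
  moreover have "adj G u v \<longleftrightarrow> adj J (if u \<in> A then gA u else gB u) (if v \<in> A then gA v else gB v)"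
    if "u \<in> A \<union> B" "v \<in> A \<union> B" for u v
    using that gA gB cross V(2) by (auto simp: induced_emb_induced adj_commute)
  ultimately show ?thesis
    using gA gB V(1) by (auto simp: induced_emb_def induced_emb_induced)
qed

lemma contains_induced_extend_clique:
  assumes V: "verts G = A \<union> B" "A \<inter> B = {}" "finite B"
    and B: "clique G B" and g: "induced_emb (induced G A) J g" "g ` A \<inter> C = {}"
    and C: "clique J C" "finite C" "card B \<le> card C"
    and cross: "\<forall>a\<in>A. \<forall>b\<in>B. \<forall>c\<in>C. adj G a b \<longleftrightarrow> adj J (g a) c"
  shows "contains_induced J G"
proof -
  obtain h where h: "induced_emb (induced G B) J h" "h ` B \<subseteq> C"
    using induced_emb_homogeneous[of B G C J] V B C by (auto simp: clique_def)
  have "induced_emb G J (\<lambda>x. if x \<in> A then g x else h x)"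
    using V(1,2) g(1) h(1)
  proof (rule induced_emb_Un)
    show "g ` A \<inter> h ` B = {}" using g(2) h(2) by blast
    show "\<forall>a\<in>A. \<forall>b\<in>B. adj G a b \<longleftrightarrow> adj J (g a) (h b)" using cross h(2) by blast
  qed
  then show ?thesis unfolding contains_induced_iff_emb by blast
qed

lemma contains_induced_pair_plus_clique:
  assumes G: "verts G = A \<union> B" "A \<inter> B = {}" "finite (verts G)" "card A \<le> 2" "clique G B"
    and A: "clique G A \<and> adj K a1 a2 \<or> stable G A \<and> \<not> adj K a1 a2"
    and cross_G: "\<forall>a\<in>A. \<forall>b\<in>B. adj G a b \<longleftrightarrow> \<beta>"
    and a12: "a1 \<in> verts K" "a2 \<in> verts K" "a1 \<noteq> a2" "a1 \<notin> C" "a2 \<notin> C"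
    and C: "clique K C" "finite C" "card (verts G) \<le> card C"
    and cross_K: "\<forall>c\<in>C. (adj K a1 c \<longleftrightarrow> \<beta>) \<and> (adj K a2 c \<longleftrightarrow> \<beta>)"
  shows "contains_induced K G"
proof -
  have AT: "clique G A \<and> clique K {a1, a2} \<or> stable G A \<and> stable K {a1, a2}"
    using A clique_pair[OF a12(1,2)] stable_pair[OF a12(1,2)] by blast
  have "A \<subseteq> verts G" "finite A" "card A \<le> card {a1, a2}" "finite {a1, a2}"
    using G a12(3) by auto
  then obtain g where g: "induced_emb (induced G A) K g" "g ` A \<subseteq> {a1, a2}"
    using induced_emb_homogeneous[of A G "{a1, a2}" K] AT by blast
  have "card B \<le> card (verts G)" using G(1,3) by (simp add: card_mono)
  show ?thesis
  proof (rule contains_induced_extend_clique[OF G(1,2) _ G(5) g(1) _ C(1,2)])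
    show "finite B" "card B \<le> card C" using G(1,3) \<open>card B \<le> card (verts G)\<close> C(3) by auto
    show "g ` A \<inter> C = {}" using g(2) a12(4,5) by blast
    show "\<forall>a\<in>A. \<forall>b\<in>B. \<forall>c\<in>C. adj G a b \<longleftrightarrow> adj K (g a) c"
    proof (intro ballI)
      fix a b c assume abc: "a \<in> A" "b \<in> B" "c \<in> C"
      then have "g a = a1 \<or> g a = a2" using g(2) by blast
      with abc cross_G cross_K show "adj G a b \<longleftrightarrow> adj K (g a) c" by auto
    qed
  qed
qed

section \<open>Partitions into stable sets and cliques\<close>

lemma stable_preimage: "induced_emb G H g \<Longrightarrow> stable H S \<Longrightarrow> stable G {v\<in>verts G. g v \<in> S}"
  unfolding induced_emb_def stable_def by auto

lemma clique_preimage: "induced_emb G H g \<Longrightarrow> clique H S \<Longrightarrow> clique G {v\<in>verts G. g v \<in> S}"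
  unfolding induced_emb_def clique_def by (auto dest: inj_onD)

lemma part_st_preimage:
  assumes g: "induced_emb G H g" and W: "part_st H W s t"
  shows "part_st G {v\<in>verts G. g v \<in> W} s t"
proof -
  obtain f where f: "\<forall>v\<in>W. f v < s + t" "\<forall>i<s. stable H {v\<in>W. f v = i}"
     "\<forall>i. s \<le> i \<and> i < s + t \<longrightarrow> clique H {v\<in>W. f v = i}"
    using W by (auto simp: part_st_def)
  have classes: "{v \<in> {v\<in>verts G. g v \<in> W}. (f \<circ> g) v = i} = {v\<in>verts G. g v \<in> {w\<in>W. f w = i}}"
    for i by auto
  show ?thesis
    unfolding part_st_def
  proof (intro exI[of _ "f \<circ> g"] conjI allI impI ballI)
    show "(f \<circ> g) v < s + t" if "v \<in> {v\<in>verts G. g v \<in> W}" for v using that f(1) by simp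
    show "stable G {v \<in> {v\<in>verts G. g v \<in> W}. (f \<circ> g) v = i}" if "i < s" for i
      unfolding classes using that f(2) by (blast intro: stable_preimage[OF g])
    show "clique G {v \<in> {v\<in>verts G. g v \<in> W}. (f \<circ> g) v = i}" if "s \<le> i \<and> i < s + t" for i
      unfolding classes using that f(3) by (blast intro: clique_preimage[OF g])
  qed
qed

lemma part_st_verts_if_contains_induced:
  assumes "contains_induced G H" "part_st G (verts G) s t"
  shows "part_st H (verts H) s t"
proof -
  obtain g where g: "induced_emb H G g" using assms(1) contains_induced_iff_emb by blast
  then have "{v\<in>verts H. g v \<in> verts G} = verts H" by (auto simp: induced_emb_def)
  with part_st_preimage[OF g assms(2)] show ?thesis by simp
qed

lemma part_st_mono:
  assumes W: "part_st G W s t" and le: "s \<le> s'" "t \<le> t'"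
  shows "part_st G W s' t'"
proof -
  obtain f where f: "\<forall>v\<in>W. f v < s + t" "\<forall>i<s. stable G {v\<in>W. f v = i}"
     "\<forall>i. s \<le> i \<and> i < s + t \<longrightarrow> clique G {v\<in>W. f v = i}"
    using W by (auto simp: part_st_def)
  define f' where "f' v = (if f v < s then f v else f v + (s' - s))" for v
  have "stable G {v\<in>W. f' v = i}" if "i < s'" for i
  proof (cases "i < s")
    case True
    then have "{v\<in>W. f' v = i} = {v\<in>W. f v = i}" by (auto simp: f'_def)
    with f True show ?thesis by simp
  next
    case False
    then have "{v\<in>W. f' v = i} = {}" using le that by (auto simp: f'_def)
    then show ?thesis by (metis stable_empty)
  qed
  moreover have "clique G {v\<in>W. f' v = i}" if "s' \<le> i" "i < s' + t'" for i
  proof (cases "i - (s' - s) < s + t")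
    case True
    then have "{v\<in>W. f' v = i} = {v\<in>W. f v = i - (s' - s)}" using le that by (auto simp: f'_def)
    with f True that le show ?thesis by simp
  next
    case False
    then have "{v\<in>W. f' v = i} = {}" using le that f by (auto simp: f'_def)
    then show ?thesis by (metis clique_empty)
  qed
  moreover have "\<forall>v\<in>W. f' v < s' + t'" using f le by (auto simp: f'_def)
  ultimately show ?thesis unfolding part_st_def by blast
qed

lemma part_st_Un_cliques:
  assumes "A \<inter> B = {}" "part_st G A s a" "part_st G B 0 b"
  shows "part_st G (A \<union> B) s (a + b)"
proof -
  obtain f where f: "\<forall>v\<in>A. f v < s + a" "\<forall>i<s. stable G {v\<in>A. f v = i}"
     "\<forall>i. s \<le> i \<and> i < s + a \<longrightarrow> clique G {v\<in>A. f v = i}"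
    using assms(2) by (auto simp: part_st_def)
  obtain g where g: "\<forall>v\<in>B. g v < b" "\<forall>i<b. clique G {v\<in>B. g v = i}"
    using assms(3) by (auto simp: part_st_def)
  define h where "h v = (if v \<in> A then f v else s + a + g v)" for v
  have low: "{v\<in>A \<union> B. h v = i} = {v\<in>A. f v = i}" if "i < s + a" for i
    using that by (auto simp: h_def)
  have high: "{v\<in>A \<union> B. h v = i} = {v\<in>B. g v = i - (s + a)}" if "s + a \<le> i" for i
    using that assms(1) f(1) by (auto simp: h_def)
  show ?thesis
    unfolding part_st_def
  proof (intro exI[of _ h] conjI allI impI ballI)
    show "h v < s + (a + b)" if "v \<in> A \<union> B" for v using that f(1) g(1) by (auto simp: h_def)
    show "stable G {v\<in>A \<union> B. h v = i}" if "i < s" for i using that low f(2) by simp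
    show "clique G {v\<in>A \<union> B. h v = i}" if "s \<le> i \<and> i < s + (a + b)" for i
    proof (cases "i < s + a")
      case True with that low f(3) show ?thesis by simp
    next
      case False with that high g(2) show ?thesis by simp
    qed
  qed
qed

text \<open>Class s is unconstrained, so this removes a stable class as well as a clique.\<close>
lemma part_st_remove_class:
  assumes "\<forall>v\<in>W. f v < s + 1 + t" "\<forall>i<s. stable G {v\<in>W. f v = i}"
    and "\<forall>i. s < i \<and> i < s + 1 + t \<longrightarrow> clique G {v\<in>W. f v = i}"
  shows "part_st G (W - {v\<in>W. f v = s}) s t"
proof -
  define f' where "f' v = (if f v < s then f v else f v - 1)" for v
  have "{v\<in>W - {v\<in>W. f v = s}. f' v = i} = {v\<in>W. f v = i}" if "i < s" for i
    using that by (auto simp: f'_def)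
  moreover have "{v\<in>W - {v\<in>W. f v = s}. f' v = i} = {v\<in>W. f v = i + 1}" if "s \<le> i" for i
    using that by (auto simp: f'_def)
  ultimately show ?thesis
    unfolding part_st_def using assms by (intro exI[of _ f']) (auto simp: f'_def)
qed

lemma part_st_remove_stable:
  assumes "part_st G W (s + 1) t"
  obtains X where "X \<subseteq> W" "stable G X" "part_st G (W - X) s t"
proof -
  obtain f where f: "\<forall>v\<in>W. f v < s + 1 + t" "\<forall>i<s + 1. stable G {v\<in>W. f v = i}"
     "\<forall>i. s + 1 \<le> i \<and> i < s + 1 + t \<longrightarrow> clique G {v\<in>W. f v = i}"
    using assms by (auto simp: part_st_def)
  show thesis
    using f part_st_remove_class[of W f s t G] by (intro that[of "{v\<in>W. f v = s}"]) auto
qed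

lemma part_st_remove_clique:
  assumes "part_st G W s (t + 1)"
  obtains X where "X \<subseteq> W" "clique G X" "part_st G (W - X) s t"
proof -
  obtain f where f: "\<forall>v\<in>W. f v < s + 1 + t" "\<forall>i<s. stable G {v\<in>W. f v = i}"
     "\<forall>i. s \<le> i \<and> i < s + 1 + t \<longrightarrow> clique G {v\<in>W. f v = i}"
    using assms by (auto simp: part_st_def)
  show thesis
    using f part_st_remove_class[of W f s t G] by (intro that[of "{v\<in>W. f v = s}"]) auto
qed

section \<open>Reduced graphs of Forb(H)\<close>

text \<open>The family of the definition of reduced graphs: V(G) splits into a set inducing a member
  of iota(J), s stable sets and t cliques.\<close>
definition iota_part :: "'b graph \<Rightarrow> nat \<Rightarrow> nat \<Rightarrow> 'a graph \<Rightarrow> bool" where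
  "iota_part J s t G \<longleftrightarrow>
     (\<exists>X \<subseteq> verts G. contains_induced J (induced G X) \<and> part_st G (verts G - X) s t)"

lemma iota_part_preimage:
  assumes g: "induced_emb G H g" and H: "iota_part J s t H"
  shows "iota_part J s t G"
proof -
  obtain X where X: "X \<subseteq> verts H" "contains_induced J (induced H X)" "part_st H (verts H - X) s t"
    using H by (auto simp: iota_part_def)
  define P where "P = {v\<in>verts G. g v \<in> X}"
  have "{v\<in>verts G. g v \<in> verts H - X} = verts G - P"
    using g by (auto simp: P_def induced_emb_def)
  then have "part_st G (verts G - P) s t" using part_st_preimage[OF g X(3)] by simp
  moreover have "induced_emb (induced G P) (induced H X) g"
    by (rule induced_emb_restrict[OF g]) (auto simp: P_def)
  then have "contains_induced J (induced G P)"
    using X(2) induced_emb_comp unfolding contains_induced_iff_emb by blast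
  moreover have "P \<subseteq> verts G" by (auto simp: P_def)
  ultimately show ?thesis unfolding iota_part_def by blast
qed

lemma iota_part_if_stable:
  assumes "part_st H (verts H) (s + 1) t" "finite (verts H)"
    and "stable K T" "finite T" "card (verts H) \<le> card T"
  shows "iota_part K s t H"
proof -
  obtain X where X: "X \<subseteq> verts H" "stable H X" "part_st H (verts H - X) s t"
    using part_st_remove_stable[OF assms(1)] .
  have "finite X" using X(1) assms(2) by (rule finite_subset)
  have "card X \<le> card T" using card_mono[OF assms(2) X(1)] assms(5) by linarith
  obtain g where "induced_emb (induced H X) K g"
    using induced_emb_homogeneous[OF X(1) \<open>finite X\<close> assms(4) \<open>card X \<le> card T\<close>] X(2) assms(3)
    by blast
  with X show ?thesis unfolding iota_part_def contains_induced_iff_emb by blast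
qed

lemma iota_part_if_clique:
  assumes "part_st H (verts H) s (t + 1)" "finite (verts H)"
    and "clique K T" "finite T" "card (verts H) \<le> card T"
  shows "iota_part K s t H"
proof -
  obtain X where X: "X \<subseteq> verts H" "clique H X" "part_st H (verts H - X) s t"
    using part_st_remove_clique[OF assms(1)] .
  have "finite X" using X(1) assms(2) by (rule finite_subset)
  have "card X \<le> card T" using card_mono[OF assms(2) X(1)] assms(5) by linarith
  obtain g where "induced_emb (induced H X) K g"
    using induced_emb_homogeneous[OF X(1) \<open>finite X\<close> assms(4) \<open>card X \<le> card T\<close>] X(2) assms(3)
    by blast
  with X show ?thesis unfolding iota_part_def contains_induced_iff_emb by blast
qed

lemma H_st_subset_Forb_iff:
  assumes "wf_graph H"
  shows "H_st s t \<subseteq> Forb H \<longleftrightarrow> \<not> part_st H (verts H) s t"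
proof
  assume "H_st s t \<subseteq> Forb H"
  from assms have "finite (verts H)" by (simp add: wf_graph_def)
  then obtain H' :: "nat graph" and \<psi> where H': "wf_graph H'" "induced_emb H' H \<psi>" "contains_induced H' H"
    by (rule ex_nat_copy)
  then have "H' \<notin> H_st s t" using \<open>H_st s t \<subseteq> Forb H\<close> by (auto simp: Forb_def)
  moreover have "contains_induced H H'" using H'(2) contains_induced_iff_emb by blast
  ultimately show "\<not> part_st H (verts H) s t"
    using H'(1) part_st_verts_if_contains_induced unfolding H_st_def by blast
next
  assume "\<not> part_st H (verts H) s t"
  then show "H_st s t \<subseteq> Forb H"
    unfolding H_st_def Forb_def using part_st_verts_if_contains_induced by blast
qed

lemma iota_part_implies_Forb_iff:
  assumes "wf_graph H"
  shows "(\<forall>G. wf_graph G \<and> iota_part J s t G \<longrightarrow> G \<in> Forb H) \<longleftrightarrow> \<not> iota_part J s t H"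
proof
  assume Forb: "\<forall>G. wf_graph G \<and> iota_part J s t G \<longrightarrow> G \<in> Forb H"
  from assms have "finite (verts H)" by (simp add: wf_graph_def)
  then obtain H' :: "nat graph" and \<psi> where H': "wf_graph H'" "induced_emb H' H \<psi>" "contains_induced H' H"
    by (rule ex_nat_copy)
  show "\<not> iota_part J s t H"
  proof
    assume "iota_part J s t H"
    then have "H' \<in> Forb H" using Forb H'(1) iota_part_preimage[OF H'(2)] by blast
    with H'(3) show False by (simp add: Forb_def)
  qed
next
  assume "\<not> iota_part J s t H"
  then show "\<forall>G. wf_graph G \<and> iota_part J s t G \<longrightarrow> G \<in> Forb H"
    unfolding Forb_def contains_induced_iff_emb using iota_part_preimage by blast
qed

section \<open>Forb(H) for an l-EPS-graph H\<close>

lemma l_EPS_not_clique_or_co_star: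
  assumes H: "l_EPS l H" and X: "X \<subseteq> verts H" "part_st H (verts H - X) 0 (l - 1)"
  shows "\<not> clique H X \<and> \<not> co_star (induced H X)"
proof -
  have "l \<ge> 1" using H by (simp add: l_EPS_def)
  obtain f where f: "\<forall>v\<in>verts H - X. f v < l - 1" "\<forall>i<l - 1. clique H {v\<in>verts H - X. f v = i}"
    using X(2) by (auto simp: part_st_def)
  define f' where "f' v = (if v \<in> X then 0 else f v + 1)" for v
  have "\<forall>v\<in>verts H. f' v < l" using f(1) \<open>l \<ge> 1\<close> by (auto simp: f'_def less_diff_conv)
  moreover have "clique H {v\<in>verts H. f' v = i}" if "1 \<le> i" "i < l" for i
  proof -
    have "{v\<in>verts H. f' v = i} = {v\<in>verts H - X. f v = i - 1}" using that by (auto simp: f'_def)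
    with f(2) that show ?thesis by simp
  qed
  ultimately have "\<not> (clique H {v\<in>verts H. f' v = 0} \<or> co_star (induced H {v\<in>verts H. f' v = 0}))"
    using H unfolding l_EPS_def by blast
  moreover have "{v\<in>verts H. f' v = 0} = X" using X(1) by (auto simp: f'_def)
  ultimately show ?thesis by simp
qed

lemma l_EPS_not_part_st_cliques:
  assumes H: "l_EPS l H"
  shows "\<not> part_st H (verts H) 0 l"
proof
  assume "part_st H (verts H) 0 l"
  moreover have "l = (l - 1) + 1" using H by (simp add: l_EPS_def)
  ultimately obtain X where "X \<subseteq> verts H" "clique H X" "part_st H (verts H - X) 0 (l - 1)"
    by (metis part_st_remove_clique)
  with l_EPS_not_clique_or_co_star[OF H] show False by blast
qed

lemma fam_Cplus_clique_Diff: "fam_Cplus G \<Longrightarrow> \<exists>v. clique G (verts G - {v})"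
  unfolding fam_Cplus_def by (auto intro: clique_subset)

lemma l_EPS_part_st_Suc_cliques:
  assumes H: "l_EPS l H"
  shows "part_st H (verts H) 0 (l + 1)"
proof -
  obtain X where X: "X \<subseteq> verts H" "fam_Cplus (induced H X)" "part_st H (verts H - X) 0 (l - 1)"
    using H by (auto simp: l_EPS_def EPS2_part_def)
  obtain v where v: "clique H (X - {v})"
    using fam_Cplus_clique_Diff[OF X(2)] clique_induced_iff[OF X(1)] by auto
  have "clique H {w\<in>X. w = v}"
    using X(1) unfolding clique_def by auto
  moreover have "{w\<in>X. (if w = v then 1 else 0) = i} = (if i = 0 then X - {v} else {w\<in>X. w = v})"
    if "i < 2" for i :: nat
    using that by auto
  ultimately have "part_st H X 0 2"
    unfolding part_st_def using v
    by (intro exI[of _ "\<lambda>w. if w = v then 1 else 0"]) simp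
  from part_st_Un_cliques[OF _ this X(3)] X(1) H show ?thesis
    by (auto simp: l_EPS_def Un_absorb1 Nat.add_diff_assoc)
qed

lemma l_EPS_part_st_above:
  assumes H: "l_EPS l H" and "l < y" "s \<le> y"
  shows "part_st H (verts H) s (y - s)"
proof -
  have EPS1: "part_st H (verts H) s (l - s)" if "1 \<le> s" "s \<le> l" for s
    using H that by (simp add: l_EPS_def)
  consider "s = 0" | "1 \<le> s" "s \<le> l" | "l < s" by linarith
  then show ?thesis
  proof cases
    case 1
    with part_st_mono[OF l_EPS_part_st_Suc_cliques[OF H], of 0 y] assms(2) show ?thesis by simp
  next
    case 2
    with part_st_mono[OF EPS1[OF 2], of s "y - s"] assms(2) show ?thesis by simp
  next
    case 3
    moreover have "1 \<le> l" using H by (simp add: l_EPS_def)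
    ultimately show ?thesis using part_st_mono[OF EPS1[of l], of s "y - s"] by simp
  qed
qed

lemma chi_c_Forb:
  assumes "wf_graph H" "l_EPS l H"
  shows "chi_c (Forb H) = l"
  unfolding chi_c_def H_st_subset_Forb_iff[OF assms(1)]
proof (rule Greatest_equality)
  show "\<exists>s\<le>l. \<not> part_st H (verts H) s (l - s)"
    using l_EPS_not_part_st_cliques[OF assms(2)] by auto
  show "y \<le> l" if "\<exists>s\<le>y. \<not> part_st H (verts H) s (y - s)" for y
    using that l_EPS_part_st_above[OF assms(2)] by (meson not_le)
qed

lemma red_Forb_iff:
  assumes "wf_graph H" "l_EPS l H"
  shows "J \<in> red (Forb H) \<longleftrightarrow> wf_graph J \<and> (\<exists>s. s + 1 \<le> l \<and> \<not> iota_part J s (l - 1 - s) H)"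
  unfolding red_def reduced_def Let_def chi_c_Forb[OF assms] iota_part_def[symmetric]
    iota_part_implies_Forb_iff[OF assms(1)]
  by simp

section \<open>Complements of stars\<close>

definition co_star_graph :: "nat \<Rightarrow> nat graph" where
  "co_star_graph m = ({0..m}, {{i, j} | i j. 1 \<le> i \<and> i \<le> m \<and> 1 \<le> j \<and> j \<le> m \<and> i \<noteq> j})"

lemma verts_co_star_graph [simp]: "verts (co_star_graph m) = {0..m}"
  by (simp add: co_star_graph_def verts_def)

lemma adj_co_star_graph:
  "adj (co_star_graph m) i j \<longleftrightarrow> i \<noteq> j \<and> 1 \<le> i \<and> i \<le> m \<and> 1 \<le> j \<and> j \<le> m"
  by (auto simp: adj_def co_star_graph_def edges_def doubleton_eq_iff)

lemma wf_co_star_graph: "wf_graph (co_star_graph m)"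
  unfolding wf_graph_def verts_co_star_graph by (fastforce simp: co_star_graph_def edges_def)

lemma not_s_star_0_co_star_graph:
  assumes "m \<ge> 2"
  shows "\<not> s_star 0 (co_star_graph m)"
proof
  assume "s_star 0 (co_star_graph m)"
  then obtain S where S: "S \<subseteq> {0..m}" "card S = 0"
    and "clique (co_star_graph m) ({0..m} - S) \<or> stable (co_star_graph m) ({0..m} - S)"
    unfolding s_star_def by auto
  moreover have "S = {}" using S finite_subset[OF S(1)] by simp
  moreover have "\<not> adj (co_star_graph m) 0 1" "adj (co_star_graph m) 1 2"
    using assms by (simp_all add: adj_co_star_graph)
  moreover have "0 \<in> {0..m}" "1 \<in> {0..m}" "2 \<in> {0..m}" using assms by simp_all
  ultimately show False unfolding clique_def stable_def by (metis Diff_empty zero_neq_one)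
qed

lemma clique_or_co_star_if_contained_in_co_star_graph:
  assumes "contains_induced (co_star_graph m) G"
  shows "clique G (verts G) \<or> co_star G"
proof -
  obtain h where h: "induced_emb G (co_star_graph m) h"
    using assms contains_induced_iff_emb by blast
  then have adj_h: "adj G u v \<longleftrightarrow> u \<noteq> v \<and> h u \<noteq> 0 \<and> h v \<noteq> 0"
    if "u \<in> verts G" "v \<in> verts G" for u v
    using that inj_onD[of h "verts G" u v]
    by (auto simp: induced_emb_def adj_co_star_graph image_subset_iff)
  show ?thesis
  proof (cases "\<exists>w\<in>verts G. h w = 0")
    case True
    then obtain w where w: "w \<in> verts G" "h w = 0" by blast
    have "h v \<noteq> 0" if "v \<in> verts G - {w}" for v
      using inj_onD[of h "verts G" v w] h w that by (auto simp: induced_emb_def)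
    then have "clique G (verts G - {w})" using adj_h by (auto simp: clique_def)
    moreover have "\<forall>u\<in>verts G. \<not> adj G w u" using adj_h w by simp
    ultimately show ?thesis using w unfolding co_star_def by blast
  next
    case False
    then show ?thesis using adj_h by (auto simp: clique_def)
  qed
qed

lemma co_star_graph_red_Forb:
  assumes "wf_graph H" "l_EPS l H"
  shows "co_star_graph m \<in> red (Forb H)"
proof -
  have "\<not> iota_part (co_star_graph m) 0 (l - 1) H"
  proof
    assume "iota_part (co_star_graph m) 0 (l - 1) H"
    then obtain X where X: "X \<subseteq> verts H" "contains_induced (co_star_graph m) (induced H X)"
      "part_st H (verts H - X) 0 (l - 1)"
      unfolding iota_part_def by blast
    have "clique H X \<or> co_star (induced H X)"
      using clique_or_co_star_if_contained_in_co_star_graph[OF X(2)] clique_induced_iff[OF X(1)]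
      by auto
    with l_EPS_not_clique_or_co_star[OF assms(2) X(1,3)] show False by blast
  qed
  moreover have "0 + 1 \<le> l" using assms(2) by (simp add: l_EPS_def)
  ultimately show ?thesis
    using wf_co_star_graph red_Forb_iff[OF assms] by (metis diff_zero)
qed

lemma not_critical_0:
  assumes "wf_graph H" "l_EPS l H"
  shows "\<not> critical 0 H"
proof
  assume "critical 0 H"
  then obtain n0 where "\<forall>K\<in>red (Forb H). n0 \<le> card (verts K) \<longrightarrow> s_star 0 K"
    unfolding critical_def by blast
  then have "s_star 0 (co_star_graph (n0 + 2))"
    using co_star_graph_red_Forb[OF assms] by simp
  then show False using not_s_star_0_co_star_graph by simp
qed

section \<open>Large reduced graphs are 1-stars\<close>

lemma contains_induced_S2_or_C:
  assumes "fam_S2_or_C G" "finite (verts G)"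
    and "clique K C" "finite C" "card (verts G) \<le> card C"
    and "a1 \<in> verts K" "a2 \<in> verts K" "a1 \<noteq> a2" "a1 \<notin> C" "a2 \<notin> C" "\<not> adj K a1 a2"
    and "\<forall>c\<in>C. \<not> adj K a1 c \<and> \<not> adj K a2 c"
  shows "contains_induced K G"
proof -
  obtain A B where AB: "A \<inter> B = {}" "A \<union> B = verts G" "stable G A" "card A \<le> 2" "clique G B"
    "\<forall>a\<in>A. \<forall>b\<in>B. \<not> adj G a b"
    using assms(1) unfolding fam_S2_or_C_def by blast
  show ?thesis
  proof (rule contains_induced_pair_plus_clique[where \<beta> = False,
        OF AB(2)[symmetric] AB(1) assms(2) AB(4,5) _ _ assms(6-10) assms(3-5)])
    show "clique G A \<and> adj K a1 a2 \<or> stable G A \<and> \<not> adj K a1 a2" using AB(3) assms(11) by blast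
    show "\<forall>a\<in>A. \<forall>b\<in>B. adj G a b \<longleftrightarrow> False" using AB(6) by blast
    show "\<forall>c\<in>C. (adj K a1 c \<longleftrightarrow> False) \<and> (adj K a2 c \<longleftrightarrow> False)" using assms(12) by blast
  qed
qed

lemma contains_induced_K2_or_C:
  assumes "fam_K2_or_C G" "finite (verts G)"
    and "clique K C" "finite C" "card (verts G) \<le> card C"
    and "a1 \<in> verts K" "a2 \<in> verts K" "a1 \<noteq> a2" "a1 \<notin> C" "a2 \<notin> C" "adj K a1 a2"
    and "\<forall>c\<in>C. \<not> adj K a1 c \<and> \<not> adj K a2 c"
  shows "contains_induced K G"
proof -
  obtain A B where AB: "A \<inter> B = {}" "A \<union> B = verts G" "clique G A" "card A \<le> 2" "clique G B"
    "\<forall>a\<in>A. \<forall>b\<in>B. \<not> adj G a b"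
    using assms(1) unfolding fam_K2_or_C_def by blast
  show ?thesis
  proof (rule contains_induced_pair_plus_clique[where \<beta> = False,
        OF AB(2)[symmetric] AB(1) assms(2) AB(4,5) _ _ assms(6-10) assms(3-5)])
    show "clique G A \<and> adj K a1 a2 \<or> stable G A \<and> \<not> adj K a1 a2" using AB(3) assms(11) by blast
    show "\<forall>a\<in>A. \<forall>b\<in>B. adj G a b \<longleftrightarrow> False" using AB(6) by blast
    show "\<forall>c\<in>C. (adj K a1 c \<longleftrightarrow> False) \<and> (adj K a2 c \<longleftrightarrow> False)" using assms(12) by blast
  qed
qed

lemma contains_induced_S2_join_C:
  assumes "fam_S2_join_C G" "finite (verts G)"
    and "clique K C" "finite C" "card (verts G) \<le> card C"
    and "a1 \<in> verts K" "a2 \<in> verts K" "a1 \<noteq> a2" "a1 \<notin> C" "a2 \<notin> C" "\<not> adj K a1 a2"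
    and "\<forall>c\<in>C. adj K a1 c \<and> adj K a2 c"
  shows "contains_induced K G"
proof -
  obtain A B where AB: "A \<inter> B = {}" "A \<union> B = verts G" "stable G A" "card A \<le> 2" "clique G B"
    "\<forall>a\<in>A. \<forall>b\<in>B. adj G a b"
    using assms(1) unfolding fam_S2_join_C_def by blast
  show ?thesis
  proof (rule contains_induced_pair_plus_clique[where \<beta> = True,
        OF AB(2)[symmetric] AB(1) assms(2) AB(4,5) _ _ assms(6-10) assms(3-5)])
    show "clique G A \<and> adj K a1 a2 \<or> stable G A \<and> \<not> adj K a1 a2" using AB(3) assms(11) by blast
    show "\<forall>a\<in>A. \<forall>b\<in>B. adj G a b \<longleftrightarrow> True" using AB(6) by blast
    show "\<forall>c\<in>C. (adj K a1 c \<longleftrightarrow> True) \<and> (adj K a2 c \<longleftrightarrow> True)" using assms(12) by blast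
  qed
qed

lemma contains_induced_Cplus:
  assumes G: "fam_Cplus G" "\<not> clique G (verts G)" "\<not> co_star G" "finite (verts G)"
    and C: "clique K C" "finite C" "card (verts G) \<le> card C"
    and wq: "w \<in> verts K" "q \<in> verts K" "adj K w q" "w \<notin> C" "q \<notin> C"
    and cross_K: "\<forall>c\<in>C. \<not> adj K w c" "\<forall>c\<in>C. adj K q c"
  shows "contains_induced K G"
proof -
  obtain v where v: "v \<in> verts G" "clique G (verts G - {v})" "card {u\<in>verts G. adj G v u} \<le> 1"
    using G(1,2) unfolding fam_Cplus_def by blast
  define N where "N = {u\<in>verts G. adj G v u}"
  have "N \<noteq> {}" using G(3) v(1,2) unfolding co_star_def N_def by blast
  moreover have "finite N" using G(4) by (simp add: N_def)
  ultimately have "card N = 1" using v(3) by (simp add: N_def[symmetric] le_Suc_eq)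
  then obtain u where "N = {u}" by (rule card_1_singletonE)
  then have u: "u \<in> verts G" "adj G v u" and only_u: "\<And>b. b \<in> verts G \<Longrightarrow> adj G v b \<Longrightarrow> b = u"
    by (auto simp: N_def)
  have "u \<noteq> v" "w \<noteq> q" using u(2) wq(3) by auto
  define g where "g z = (if z = v then w else q)" for z
  have g: "induced_emb (induced G {v, u}) K g"
    unfolding induced_emb_induced g_def
    using u(2) wq(1-3) \<open>u \<noteq> v\<close> \<open>w \<noteq> q\<close> adj_commute[of G v u] adj_commute[of K w q]
    by (auto simp: inj_on_def)
  show ?thesis
  proof (rule contains_induced_extend_clique[of G _ "verts G - {v, u}", OF _ _ _ _ g _ C(1,2)])
    show "verts G = {v, u} \<union> (verts G - {v, u})" "{v, u} \<inter> (verts G - {v, u}) = {}"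
      using u(1) v(1) by auto
    show "finite (verts G - {v, u})" "card (verts G - {v, u}) \<le> card C"
      using G(4) C(3) card_mono[OF G(4), of "verts G - {v, u}"] by auto
    show "clique G (verts G - {v, u})" using v(2) by (rule clique_subset) blast
    show "g ` {v, u} \<inter> C = {}" using wq(4,5) by (auto simp: g_def)
    show "\<forall>a\<in>{v, u}. \<forall>b\<in>verts G - {v, u}. \<forall>c\<in>C. adj G a b \<longleftrightarrow> adj K (g a) c"
    proof (intro ballI)
      fix a b c assume abc: "a \<in> {v, u}" "b \<in> verts G - {v, u}" "c \<in> C"
      have "u \<in> verts G - {v}" "b \<in> verts G - {v}" "u \<noteq> b"
        using u(1) \<open>u \<noteq> v\<close> abc(2) by auto
      then have "adj G u b" using v(2) unfolding clique_def by blast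
      moreover have "\<not> adj G v b" using only_u abc(2) by blast
      moreover have "\<not> adj K w c" "adj K q c" using cross_K abc(3) by simp_all
      ultimately show "adj G a b \<longleftrightarrow> adj K (g a) c"
        using abc(1) \<open>u \<noteq> v\<close> unfolding g_def by auto
    qed
  qed
qed

lemma ex_maximum_clique:
  assumes "finite (verts K)"
  obtains Q where "clique K Q" "\<forall>Q'. clique K Q' \<longrightarrow> card Q' \<le> card Q"
proof -
  have "\<forall>Q'. clique K Q' \<longrightarrow> card Q' < card (verts K) + 1"
    using card_mono[OF assms] by (auto simp: clique_def less_Suc_eq_le)
  with ex_has_greatest_nat[of "clique K" "{}" card] that show thesis by auto
qed

lemma ramsey_clique_or_stable:
  "\<exists>r. \<forall>K :: 'a graph. finite (verts K) \<and> r \<le> card (verts K) \<longrightarrow>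
    (\<exists>R. card R = m \<and> clique K R \<or> card R = n \<and> stable K R)"
proof -
  obtain r where r: "\<forall>(V :: 'a set) E. finite V \<and> r \<le> card V \<longrightarrow>
      (\<exists>R\<subseteq>V. card R = m \<and> Ramsey.clique R E \<or> card R = n \<and> indep R E)"
    using ramsey2[of m n] by blast
  have "\<exists>R. card R = m \<and> clique K R \<or> card R = n \<and> stable K R"
    if "finite (verts K)" "r \<le> card (verts K)" for K :: "'a graph"
  proof -
    have "\<exists>R\<subseteq>verts K. card R = m \<and> Ramsey.clique R (edges K) \<or> card R = n \<and> indep R (edges K)"
      using r that by simp
    then obtain R where "R \<subseteq> verts K"
      "card R = m \<and> Ramsey.clique R (edges K) \<or> card R = n \<and> indep R (edges K)"
      by blast
    then show ?thesis
      unfolding Defs.clique_def Ramsey.clique_def stable_def indep_def adj_def by blast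
  qed
  then show ?thesis by blast
qed

lemma anticomplete_outside_maximum_clique:
  assumes K: "finite (verts K)"
    and Q: "clique K Q" "\<forall>Q'. clique K Q' \<longrightarrow> card Q' \<le> card Q" "2 * n \<le> card Q"
    and no_pendant: "\<And>w q C. w \<in> verts K \<Longrightarrow> q \<in> verts K \<Longrightarrow> adj K w q \<Longrightarrow>
        clique K C \<Longrightarrow> w \<notin> C \<Longrightarrow> q \<notin> C \<Longrightarrow> n \<le> card C \<Longrightarrow>
        \<forall>c\<in>C. \<not> adj K w c \<Longrightarrow> \<forall>c\<in>C. adj K q c \<Longrightarrow> False"
    and no_twins: "\<And>w q C. w \<in> verts K \<Longrightarrow> q \<in> verts K \<Longrightarrow> w \<noteq> q \<Longrightarrow> \<not> adj K w q \<Longrightarrow>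
        clique K C \<Longrightarrow> w \<notin> C \<Longrightarrow> q \<notin> C \<Longrightarrow> n \<le> card C \<Longrightarrow>
        \<forall>c\<in>C. adj K w c \<Longrightarrow> \<forall>c\<in>C. adj K q c \<Longrightarrow> False"
    and w: "w \<in> verts K - Q"
  shows "\<forall>q\<in>Q. \<not> adj K w q"
proof (rule ccontr)
  assume "\<not> (\<forall>q\<in>Q. \<not> adj K w q)"
  then obtain q0 where q0: "q0 \<in> Q" "adj K w q0" by blast
  have QK: "Q \<subseteq> verts K" using Q(1) by (simp add: clique_def)
  have Q_adj: "adj K x y" if "x \<in> Q" "y \<in> Q" "x \<noteq> y" for x y
    using Q(1) that by (simp add: clique_def)
  define N where "N = {q\<in>Q. \<not> adj K w q}"
  have N: "N \<subseteq> Q" "finite N" "w \<notin> N" "q0 \<notin> N"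
    using w q0 finite_subset[OF QK K] by (auto simp: N_def)
  consider "n \<le> card N" | "N = {}" | q1 where "q1 \<in> N" "card N < n" by fastforce
  then show False
  proof cases
    case 1
    show False
    proof (rule no_pendant[of w q0 N])
      show "clique K N" using clique_subset[OF Q(1) N(1)] .
      show "\<forall>c\<in>N. adj K q0 c" using Q_adj q0(1) N(1,4) by blast
    qed (use w q0 QK N 1 in \<open>auto simp: N_def\<close>)
  next
    case 2
    then have "clique K (insert w Q)"
      using Q(1) w unfolding clique_insert N_def by blast
    then have "card (insert w Q) \<le> card Q" using Q(2) by blast
    moreover have "card (insert w Q) = card Q + 1" using w finite_subset[OF QK K] by simp
    ultimately show False by simp
  next
    case 3
    have "card (Q - N) = card Q - card N" using N(1,2) by (simp add: card_Diff_subset)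
    then have "n \<le> card (Q - N)" using 3(2) Q(3) by linarith
    show False
    proof (rule no_twins[of w q1 "Q - N"])
      show "clique K (Q - N)" using clique_subset[OF Q(1)] by blast
      show "\<forall>c\<in>Q - N. adj K q1 c" using Q_adj 3(1) N(1) by blast
    qed (use w 3(1) QK \<open>n \<le> card (Q - N)\<close> in \<open>auto simp: N_def\<close>)
  qed
qed

lemma s_star_1_if_clique:
  assumes "clique K Q" "card (verts K - Q) \<le> 1" "\<forall>x\<in>verts K - Q. \<forall>y\<in>Q. \<not> adj K x y"
  shows "s_star 1 K"
proof -
  have "verts K - (verts K - Q) = Q" using assms(1) by (auto simp: clique_def)
  with assms show ?thesis unfolding s_star_def by (intro exI[of _ "verts K - Q"]) auto
qed

lemma EPS2_piece_not_contained:
  assumes "EPS2_part P l H" "\<not> iota_part K 0 (l - 1) H"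
  obtains X where "X \<subseteq> verts H" "P (induced H X)" "part_st H (verts H - X) 0 (l - 1)"
    "\<not> contains_induced K (induced H X)"
  using assms unfolding EPS2_part_def iota_part_def by blast

lemma no_pendant_if_not_iota_part:
  assumes H: "wf_graph H" "l_EPS l H" and K: "finite (verts K)" "\<not> iota_part K 0 (l - 1) H"
    and wq: "w \<in> verts K" "q \<in> verts K" "adj K w q"
    and C: "clique K C" "w \<notin> C" "q \<notin> C" "card (verts H) \<le> card C"
    and cross: "\<forall>c\<in>C. \<not> adj K w c" "\<forall>c\<in>C. adj K q c"
  shows False
proof -
  have "EPS2_part fam_Cplus l H" using H(2) by (simp add: l_EPS_def)
  then obtain X where X: "X \<subseteq> verts H" "fam_Cplus (induced H X)"
      "part_st H (verts H - X) 0 (l - 1)" "\<not> contains_induced K (induced H X)"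
    using K(2) by (rule EPS2_piece_not_contained)
  have "finite X" "card X \<le> card C" "finite C"
    using X(1) H(1) C(1,4) K(1) card_mono[of "verts H" X]
    by (auto simp: wf_graph_def clique_def intro: finite_subset)
  moreover have "\<not> clique (induced H X) (verts (induced H X))" "\<not> co_star (induced H X)"
    using l_EPS_not_clique_or_co_star[OF H(2) X(1,3)] clique_induced_iff[OF X(1)] by auto
  ultimately show False
    using contains_induced_Cplus[OF X(2) _ _ _ C(1) _ _ wq C(2,3) cross] X(4) by simp
qed

lemma no_twins_if_not_iota_part:
  assumes H: "wf_graph H" "l_EPS l H" and K: "finite (verts K)" "\<not> iota_part K 0 (l - 1) H"
    and wq: "w \<in> verts K" "q \<in> verts K" "w \<noteq> q" "\<not> adj K w q"
    and C: "clique K C" "w \<notin> C" "q \<notin> C" "card (verts H) \<le> card C"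
    and cross: "\<forall>c\<in>C. adj K w c" "\<forall>c\<in>C. adj K q c"
  shows False
proof -
  have "EPS2_part fam_S2_join_C l H" using H(2) by (simp add: l_EPS_def)
  then obtain X where X: "X \<subseteq> verts H" "fam_S2_join_C (induced H X)"
      "\<not> contains_induced K (induced H X)"
    using K(2) by (rule EPS2_piece_not_contained)
  have "finite X" "card X \<le> card C" "finite C"
    using X(1) H(1) C(1,4) K(1) card_mono[of "verts H" X]
    by (auto simp: wf_graph_def clique_def intro: finite_subset)
  then show False
    using contains_induced_S2_join_C[OF X(2) _ C(1) _ _ wq(1-3) C(2,3) wq(4)] cross X(3) by simp
qed

lemma no_anticomplete_pair_if_not_iota_part:
  assumes H: "wf_graph H" "l_EPS l H" and K: "finite (verts K)" "\<not> iota_part K 0 (l - 1) H"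
    and C: "clique K C" "card (verts H) \<le> card C"
    and a: "a1 \<in> verts K" "a2 \<in> verts K" "a1 \<noteq> a2" "a1 \<notin> C" "a2 \<notin> C"
    and anti: "\<forall>c\<in>C. \<not> adj K a1 c \<and> \<not> adj K a2 c"
  shows False
proof -
  have small: "finite X" "card X \<le> card C" if "X \<subseteq> verts H" for X
    using that H(1) C(2) card_mono[of "verts H" X] by (auto simp: wf_graph_def intro: finite_subset)
  have "finite C" using C(1) K(1) by (auto simp: clique_def intro: finite_subset)
  have "EPS2_part fam_S2_or_C l H" "EPS2_part fam_K2_or_C l H" using H(2) by (simp_all add: l_EPS_def)
  then obtain X1 X2 where
    X1: "X1 \<subseteq> verts H" "fam_S2_or_C (induced H X1)" "\<not> contains_induced K (induced H X1)" and
    X2: "X2 \<subseteq> verts H" "fam_K2_or_C (induced H X2)" "\<not> contains_induced K (induced H X2)"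
    using K(2) EPS2_piece_not_contained by metis
  show False
    using contains_induced_S2_or_C[OF X1(2) _ C(1) \<open>finite C\<close> _ a _ anti]
      contains_induced_K2_or_C[OF X2(2) _ C(1) \<open>finite C\<close> _ a _ anti]
      X1 X2 small by (cases "adj K a1 a2") auto
qed

lemma s_star_1_if_not_iota_part:
  assumes H: "wf_graph H" "l_EPS l H"
    and K: "finite (verts K)" "\<not> iota_part K 0 (l - 1) H"
    and R: "clique K R" "2 * card (verts H) \<le> card R"
  shows "s_star 1 K"
proof -
  obtain Q where Q: "clique K Q" "\<forall>Q'. clique K Q' \<longrightarrow> card Q' \<le> card Q"
    using ex_maximum_clique[OF K(1)] by blast
  have "2 * card (verts H) \<le> card Q" using Q(2) R by force
  have anti: "\<forall>q\<in>Q. \<not> adj K w q" if "w \<in> verts K - Q" for w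
    by (rule anticomplete_outside_maximum_clique[OF K(1) Q \<open>2 * card (verts H) \<le> card Q\<close>
          no_pendant_if_not_iota_part[OF H K] no_twins_if_not_iota_part[OF H K] that])
  have "card (verts K - Q) \<le> 1"
  proof (rule ccontr)
    assume "\<not> card (verts K - Q) \<le> 1"
    then obtain a1 a2 where a: "a1 \<in> verts K" "a2 \<in> verts K" "a1 \<noteq> a2" "a1 \<notin> Q" "a2 \<notin> Q"
      using card_le_Suc0_iff_eq[of "verts K - Q"] K(1) by auto
    then have "\<forall>c\<in>Q. \<not> adj K a1 c \<and> \<not> adj K a2 c" using anti by blast
    then show False
      using no_anticomplete_pair_if_not_iota_part[OF H K Q(1) _ a] \<open>2 * card (verts H) \<le> card Q\<close>
      by simp
  qed
  with Q(1) anti show ?thesis by (intro s_star_1_if_clique) auto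
qed

lemma critical_1:
  assumes H: "wf_graph H" "l_EPS l H"
  shows "critical 1 H"
proof -
  define n where "n = card (verts H)"
  have finH: "finite (verts H)" using H(1) by (simp add: wf_graph_def)
  have EPS1: "part_st H (verts H) s (l - s)" if "1 \<le> s" "s \<le> l" for s
    using H(2) that by (simp add: l_EPS_def)
  obtain r where r: "\<forall>K :: nat graph. finite (verts K) \<and> r \<le> card (verts K) \<longrightarrow>
      (\<exists>R. card R = 2 * n \<and> clique K R \<or> card R = n \<and> stable K R)"
    using ramsey_clique_or_stable by blast
  have "s_star 1 K" if K: "K \<in> red (Forb H)" "r \<le> card (verts K)" for K
  proof -
    obtain s where "wf_graph K" and s: "s + 1 \<le> l" "\<not> iota_part K s (l - 1 - s) H"
      using K(1) red_Forb_iff[OF H] by blast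
    then have finK: "finite (verts K)" by (simp add: wf_graph_def)
    obtain R where R: "card R = 2 * n \<and> clique K R \<or> card R = n \<and> stable K R"
      using r finK K(2) by blast
    have finR: "finite R"
      using R finK finite_subset by (auto simp: clique_def stable_def)
    have "\<not> (card R = n \<and> stable K R)"
      using iota_part_if_stable[OF _ finH _ finR, of s "l - 1 - s" K] EPS1[of "s + 1"] s
      by (auto simp: n_def)
    with R have R: "card R = 2 * n" "clique K R" by auto
    have "s = 0"
    proof (rule ccontr)
      assume "s \<noteq> 0"
      moreover have "l - s = l - 1 - s + 1" using s(1) by simp
      ultimately have "part_st H (verts H) s (l - 1 - s + 1)" using EPS1[of s] s(1) by simp
      then show False
        using iota_part_if_clique[OF _ finH R(2) finR] s(2) R(1) by (auto simp: n_def)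
    qed
    then show ?thesis
      using s_star_1_if_not_iota_part[OF H finK _ R(2)] s(2) R(1) by (simp add: n_def)
  qed
  then show ?thesis unfolding critical_def by blast
qed

theorem lemma3p11:
  fixes H :: "'a graph"
  assumes "wf_graph H" and "EPS_graph H"
  shows "critical 1 H \<and> \<not> critical 0 H"
proof -
  obtain l where "l_EPS l H" using assms(2) by (auto simp: EPS_graph_def)
  with assms(1) show ?thesis using critical_1 not_critical_0 by blast
qed

end
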